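(* Let $n=2^s m$ with $s\in\mathbb{Z}_{\ge0}$ and $m$ odd. There is a polynomial $P$ in $s+1$ variables with zero constant term, depending only on $s$, such that for every multiset $S$ of $n$ complex numbers, $M_1(T_s)=P\big(M_{1}(S),M_{2}(S),M_{4}(S),\dots,M_{2^s}(S)\big)$, where $T_0=S$ and $T_j=(T_{j-1})_\times$ for $j\in[s]$.
   Context: For a finite multiset $T=\{u_1,\dots,u_N\}$ of complex numbers (indexed with repetitions) and $p\in\mathbb{N}$, $M_p(T)=\sum_{k=1}^N u_k^p$, and $T_\times$ is the multiset $\{u_ju_k: 1\le j<k\le N\}$ (of size $\binom{N}{2}$). *)

theory Defs
  imports Complex_Main
begin

text \<open>A finite multiset T = {u_1,...,u_N} (indexed with repetitions) is represented
  by the list [u_1,...,u_N].\<close>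

definition power_sum :: "nat \<Rightarrow> complex list \<Rightarrow> complex" where
  "power_sum p T = (\<Sum>k<length T. (T ! k) ^ p)"

definition pair_prods :: "complex list \<Rightarrow> complex list" where
  "pair_prods T = [T ! j * T ! k. j \<leftarrow> [0..<length T], k \<leftarrow> [Suc j..<length T]]"

definition iter_prods :: "nat \<Rightarrow> complex list \<Rightarrow> complex list" where
  "iter_prods j S = (pair_prods ^^ j) S"

text \<open>A polynomial in the k variables x_0,...,x_{k-1} with complex coefficients is given by a
  coefficient function on exponent vectors (nat \<Rightarrow> nat) with finite support, where every
  exponent vector in the support only uses the variables 0..k-1.\<close>
definition is_poly_in :: "nat \<Rightarrow> ((nat \<Rightarrow> nat) \<Rightarrow> complex) \<Rightarrow> bool" where
  "is_poly_in k c \<longleftrightarrow> finite {\<alpha>. c \<alpha> \<noteq> 0} \<and> (\<forall>\<alpha>. c \<alpha> \<noteq> 0 \<longrightarrow> (\<forall>i\<ge>k. \<alpha> i = 0))"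

definition poly_eval :: "nat \<Rightarrow> ((nat \<Rightarrow> nat) \<Rightarrow> complex) \<Rightarrow> (nat \<Rightarrow> complex) \<Rightarrow> complex" where
  "poly_eval k c x = (\<Sum>\<alpha>\<in>{\<alpha>. c \<alpha> \<noteq> 0}. c \<alpha> * (\<Prod>i<k. x i ^ \<alpha> i))"

definition zero_const_term :: "((nat \<Rightarrow> nat) \<Rightarrow> complex) \<Rightarrow> bool" where
  "zero_const_term c \<longleftrightarrow> c (\<lambda>_. 0) = 0"

end

theory Submission
  imports Defs
begin

text \<open>Summing the p-th powers of the pairwise products gives the classical identity
  M_p(T_x) = (M_p(T)^2 - M_2p(T)) / 2. Applied with p = 2^i this expresses M_(2^i)(T_j) by a
  polynomial in M_(2^i)(T_(j-1)) and M_(2^(i+1))(T_(j-1)), so by induction on j it is a polynomial in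
  M_(2^i)(S), ..., M_(2^(i+j))(S) whose value at the origin is 0. For i = 0 and j = s this is the
  claim.\<close>

lemma power_sum_conv_sum_list: "power_sum p T = (\<Sum>u\<leftarrow>T. u ^ p)"
  unfolding power_sum_def by (simp add: sum_list_sum_nth atLeast0LessThan)

lemma power_sum_Nil [simp]: "power_sum p [] = 0"
  by (simp add: power_sum_conv_sum_list)

lemma power_sum_Cons [simp]: "power_sum p (a # T) = a ^ p + power_sum p T"
  by (simp add: power_sum_conv_sum_list)

lemma power_sum_append [simp]: "power_sum p (T @ U) = power_sum p T + power_sum p U"
  by (simp add: power_sum_conv_sum_list)

lemma power_sum_map_mult [simp]: "power_sum p (map ((*) a) T) = a ^ p * power_sum p T"
  by (induction T) (simp_all add: power_mult_distrib distrib_left)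

lemma pair_prods_Nil [simp]: "pair_prods [] = []"
  by (simp add: pair_prods_def)

lemma pair_prods_Cons [simp]: "pair_prods (a # T) = map ((*) a) T @ pair_prods T"
proof -
  have "[Suc j..<Suc n] = map Suc [j..<n]" for j n :: nat
    by (rule map_Suc_upt[symmetric])
  moreover have "map (\<lambda>k. a * T ! k) [0..<length T] = map ((*) a) T"
    by (rule nth_equalityI) simp_all
  ultimately show ?thesis
    unfolding pair_prods_def by (simp add: upt_conv_Cons comp_def del: upt_Suc)
qed

lemma power_sum_pair_prods:
  "power_sum p (pair_prods T) = (power_sum p T ^ 2 - power_sum (2 * p) T) / 2"
proof (induction T)
  case (Cons a T)
  then show ?case
    by (simp add: field_simps power2_eq_square power_mult)
qed simp

fun iter_pair_power_sum :: "nat \<Rightarrow> nat \<Rightarrow> (nat \<Rightarrow> 'a::field) \<Rightarrow> 'a" where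
  "iter_pair_power_sum 0 i x = x i"
| "iter_pair_power_sum (Suc j) i x =
     (iter_pair_power_sum j i x ^ 2 - iter_pair_power_sum j (Suc i) x) / 2"

lemma power_sum_iter_prods:
  "power_sum (2 ^ i) (iter_prods j S) = iter_pair_power_sum j i (\<lambda>l. power_sum (2 ^ l) S)"
proof (induction j arbitrary: i)
  case 0
  then show ?case by (simp add: iter_prods_def)
next
  case (Suc j)
  have "iter_prods (Suc j) S = pair_prods (iter_prods j S)"
    by (simp add: iter_prods_def)
  then show ?case
    using Suc[of i] Suc[of "Suc i"] by (simp add: power_sum_pair_prods mult.commute)
qed

lemma iter_pair_power_sum_zero: "iter_pair_power_sum j i (\<lambda>_. 0) = 0"
  by (induction j arbitrary: i) simp_all

inductive poly_function_in :: "nat \<Rightarrow> ((nat \<Rightarrow> 'a::comm_semiring_1) \<Rightarrow> 'a) \<Rightarrow> bool"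
  for k :: nat where
  var: "i < k \<Longrightarrow> poly_function_in k (\<lambda>x. x i)"
| const: "poly_function_in k (\<lambda>_. c)"
| add: "poly_function_in k f \<Longrightarrow> poly_function_in k g \<Longrightarrow> poly_function_in k (\<lambda>x. f x + g x)"
| mult: "poly_function_in k f \<Longrightarrow> poly_function_in k g \<Longrightarrow> poly_function_in k (\<lambda>x. f x * g x)"

lemma poly_function_in_diff:
  fixes f g :: "(nat \<Rightarrow> 'a::comm_ring_1) \<Rightarrow> 'a"
  assumes "poly_function_in k f" and "poly_function_in k g"
  shows "poly_function_in k (\<lambda>x. f x - g x)"
proof -
  have "poly_function_in k (\<lambda>x. f x + (- 1) * g x)"
    using assms by (intro poly_function_in.intros)
  then show ?thesis by simp
qed

lemma iter_pair_power_sum_poly_function_in: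
  "i + j < k \<Longrightarrow> poly_function_in k (iter_pair_power_sum j i)"
proof (induction j arbitrary: i)
  case 0
  then show ?case by (simp add: poly_function_in.var)
next
  case (Suc j)
  have "poly_function_in k (\<lambda>x. (iter_pair_power_sum j i x * iter_pair_power_sum j i x
          - iter_pair_power_sum j (Suc i) x) * (1 / 2 :: 'a))"
    using Suc.IH[of i] Suc.IH[of "Suc i"] Suc.prems
    by (intro poly_function_in.intros poly_function_in_diff) simp_all
  then show ?case by (simp add: power2_eq_square)
qed

text \<open>To multiply polynomials without convolving coefficient functions, they are first handled
  as lists of (coefficient, exponent vector) terms in which a monomial may repeat; terms_coeff
  then collects the coefficients into the form used by is_poly_in.\<close>

definition monom_val :: "nat \<Rightarrow> (nat \<Rightarrow> nat) \<Rightarrow> (nat \<Rightarrow> 'a::comm_monoid_mult) \<Rightarrow> 'a" where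
  "monom_val k \<alpha> x = (\<Prod>i<k. x i ^ \<alpha> i)"

definition terms_val :: "nat \<Rightarrow> ('a \<times> (nat \<Rightarrow> nat)) list \<Rightarrow> (nat \<Rightarrow> 'a::comm_semiring_1) \<Rightarrow> 'a"
  where "terms_val k L x = (\<Sum>(a, \<alpha>)\<leftarrow>L. a * monom_val k \<alpha> x)"

definition terms_in :: "nat \<Rightarrow> ('a \<times> (nat \<Rightarrow> nat)) list \<Rightarrow> bool" where
  "terms_in k L \<longleftrightarrow> (\<forall>(a, \<alpha>)\<in>set L. \<forall>i\<ge>k. \<alpha> i = 0)"

definition terms_mult ::
    "('a::times \<times> (nat \<Rightarrow> nat)) list \<Rightarrow> ('a \<times> (nat \<Rightarrow> nat)) list \<Rightarrow> ('a \<times> (nat \<Rightarrow> nat)) list"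
  where "terms_mult L M = [(a * b, \<lambda>i. \<alpha> i + \<beta> i). (a, \<alpha>) \<leftarrow> L, (b, \<beta>) \<leftarrow> M]"

lemma monom_val_add: "monom_val k (\<lambda>i. \<alpha> i + \<beta> i) x = monom_val k \<alpha> x * monom_val k \<beta> x"
  by (simp add: monom_val_def power_add prod.distrib)

lemma monom_val_single: "i < k \<Longrightarrow> monom_val k (\<lambda>j. if j = i then 1 else 0) x = x i"
  by (simp add: monom_val_def prod.delta if_distrib cong: if_cong)

lemma terms_val_append: "terms_val k (L @ M) x = terms_val k L x + terms_val k M x"
  by (simp add: terms_val_def)

lemma terms_val_mult: "terms_val k (terms_mult L M) x = terms_val k L x * terms_val k M x"
proof (induction L)
  case Nil
  then show ?case by (simp add: terms_val_def terms_mult_def)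
next
  case (Cons p L)
  obtain a \<alpha> where p: "p = (a, \<alpha>)" by force
  have "terms_val k (map (\<lambda>(b, \<beta>). (a * b, \<lambda>i. \<alpha> i + \<beta> i)) M) x
      = a * monom_val k \<alpha> x * terms_val k M x"
    by (induction M) (auto simp: terms_val_def monom_val_add algebra_simps)
  then show ?case
    using Cons by (simp add: p terms_mult_def terms_val_def algebra_simps)
qed

lemma poly_function_in_terms:
  "poly_function_in k f \<Longrightarrow> \<exists>L. terms_in k L \<and> (\<forall>x. f x = terms_val k L x)"
proof (induction rule: poly_function_in.induct)
  case (var i)
  then show ?case
    by (intro exI[of _ "[(1, \<lambda>j. if j = i then 1 else 0)]"])
      (auto simp: terms_in_def terms_val_def monom_val_single)
next
  case (const c)
  show ?case
    by (intro exI[of _ "[(c, \<lambda>_. 0)]"]) (simp add: terms_in_def terms_val_def monom_val_def)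
next
  case (add f g)
  then obtain L M where "terms_in k L" "\<And>x. f x = terms_val k L x"
    "terms_in k M" "\<And>x. g x = terms_val k M x"
    by blast
  then show ?case
    by (intro exI[of _ "L @ M"]) (auto simp: terms_in_def terms_val_append)
next
  case (mult f g)
  then obtain L M where "terms_in k L" "\<And>x. f x = terms_val k L x"
    "terms_in k M" "\<And>x. g x = terms_val k M x"
    by blast
  then show ?case
    by (intro exI[of _ "terms_mult L M"]) (simp add: terms_val_mult, auto simp: terms_in_def terms_mult_def)
qed

definition terms_coeff :: "('a::comm_monoid_add \<times> (nat \<Rightarrow> nat)) list \<Rightarrow> (nat \<Rightarrow> nat) \<Rightarrow> 'a" where
  "terms_coeff L \<gamma> = (\<Sum>(a, \<alpha>)\<leftarrow>L. if \<alpha> = \<gamma> then a else 0)"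

lemma terms_coeff_support: "{\<gamma>. terms_coeff L \<gamma> \<noteq> 0} \<subseteq> snd ` set L"
proof (induction L)
  case (Cons p L)
  then show ?case by (cases p) (auto simp: terms_coeff_def)
qed (simp add: terms_coeff_def)

lemma sum_terms_coeff:
  assumes "finite A" and "snd ` set L \<subseteq> A"
  shows "(\<Sum>\<gamma>\<in>A. terms_coeff L \<gamma> * monom_val k \<gamma> x) = terms_val k L x"
  using assms(2)
proof (induction L)
  case Nil
  then show ?case by (simp add: terms_coeff_def terms_val_def)
next
  case (Cons p L)
  obtain a \<alpha> where p: "p = (a, \<alpha>)" by force
  have "terms_coeff (p # L) \<gamma> = (if \<gamma> = \<alpha> then a else 0) + terms_coeff L \<gamma>" for \<gamma>
    by (simp add: p terms_coeff_def)
  then have "(\<Sum>\<gamma>\<in>A. terms_coeff (p # L) \<gamma> * monom_val k \<gamma> x)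
      = (\<Sum>\<gamma>\<in>A. if \<gamma> = \<alpha> then a * monom_val k \<gamma> x else 0)
        + (\<Sum>\<gamma>\<in>A. terms_coeff L \<gamma> * monom_val k \<gamma> x)"
    unfolding sum.distrib[symmetric] by (intro sum.cong) (simp_all add: distrib_right)
  also have "\<dots> = terms_val k (p # L) x"
    using Cons assms(1) by (simp add: p terms_val_def)
  finally show ?case .
qed

lemma terms_coeff_is_poly_in: "terms_in k L \<Longrightarrow> is_poly_in k (terms_coeff L)"
  using terms_coeff_support[of L] finite_surj[OF _ terms_coeff_support[of L]]
  by (fastforce simp: is_poly_in_def terms_in_def)

lemma poly_eval_terms_coeff: "poly_eval k (terms_coeff L) x = terms_val k L x"
proof -
  have "poly_eval k (terms_coeff L) x = (\<Sum>\<gamma>\<in>snd ` set L. terms_coeff L \<gamma> * monom_val k \<gamma> x)"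
    unfolding poly_eval_def monom_val_def
    by (rule sum.mono_neutral_left) (use terms_coeff_support in auto)
  also have "\<dots> = terms_val k L x"
    by (rule sum_terms_coeff) auto
  finally show ?thesis .
qed

lemma poly_function_in_coeffs:
  fixes f :: "(nat \<Rightarrow> complex) \<Rightarrow> complex"
  assumes "poly_function_in k f"
  obtains c where "is_poly_in k c" and "\<And>x. poly_eval k c x = f x"
  using poly_function_in_terms[OF assms] terms_coeff_is_poly_in poly_eval_terms_coeff by metis

lemma poly_eval_origin:
  assumes "is_poly_in k c"
  shows "poly_eval k c (\<lambda>_. 0) = c (\<lambda>_. 0)"
proof -
  have "c \<alpha> * (\<Prod>i<k. 0 ^ \<alpha> i) = (if \<alpha> = (\<lambda>_. 0) then c \<alpha> else 0)" if "c \<alpha> \<noteq> 0" for \<alpha>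
  proof (cases "\<alpha> = (\<lambda>_. 0)")
    case False
    then obtain i where "\<alpha> i \<noteq> 0" by auto
    moreover from this have "i < k"
      using assms that unfolding is_poly_in_def by (meson not_le)
    ultimately show ?thesis by (auto simp: prod_zero_iff)
  qed simp
  then have "poly_eval k c (\<lambda>_. 0) = (\<Sum>\<alpha>\<in>{\<alpha>. c \<alpha> \<noteq> 0}. if \<alpha> = (\<lambda>_. 0) then c \<alpha> else 0)"
    unfolding poly_eval_def by (intro sum.cong) simp_all
  also have "\<dots> = c (\<lambda>_. 0)"
    using assms by (simp add: is_poly_in_def sum.delta)
  finally show ?thesis .
qed

theorem lemma3p5:
  fixes s :: nat
  shows "\<exists>c. is_poly_in (Suc s) c \<and> zero_const_term c \<and>
    (\<forall>m n (S :: complex list). odd m \<longrightarrow> n = 2 ^ s * m \<longrightarrow> length S = n \<longrightarrow>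
       power_sum 1 (iter_prods s S) = poly_eval (Suc s) c (\<lambda>i. power_sum (2 ^ i) S))"
proof -
  have "poly_function_in (Suc s) (iter_pair_power_sum s 0 :: _ \<Rightarrow> complex)"
    by (rule iter_pair_power_sum_poly_function_in) simp
  then obtain c where c: "is_poly_in (Suc s) c"
    and eval: "\<And>x. poly_eval (Suc s) c x = iter_pair_power_sum s 0 x"
    using poly_function_in_coeffs by blast
  have "zero_const_term c"
    using poly_eval_origin[OF c] eval[of "\<lambda>_. 0"]
    by (simp add: zero_const_term_def iter_pair_power_sum_zero)
  then show ?thesis
    using c eval power_sum_iter_prods[of 0 s] by auto
qed

end
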